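(* Let $(\alpha,\beta)\in Q$ and let $x^*=\lim_kx_k$ for the GAFS sequence. Define $G(k)=\sum_{j=k}^\infty\gamma_j$. There exists $\bar N>0$ such that for all $k\ge0$, $$\frac{G(k)}{c^Tx_k-c^Tx^*}\le\bar N.$$
   Context: Let $A\in\mathbb{R}^{m\times n}$ have rank $m$, $b\in\mathbb{R}^m$, $c\in\mathbb{R}^n$. Primal LP: $\min c^Tx$ s.t. $Ax=b$, $x\ge 0$. Standing assumptions: the primal has a strictly positive feasible point; $c^Tx$ is not constant on the primal feasible region; the LP has an optimal solution. For $u\in\mathbb{R}^n$, $\gamma(u)=\max\{u_i: u_i>0\}$. For $x>0$, $X=\mathrm{diag}(x)$. GAFS sequence: fix $\alpha\in(0,1)$, $\beta\in[0,1)$, and $x_0>0$ with $Ax_0=b$. For $k\ge0$ let $X_k=\mathrm{diag}(x_k)$, $y_k=(AX_k^2A^T)^{-1}AX_k^2c$, $s_k=c-A^Ty_k$. Set $x_1=x_0-\alpha\frac{X_0^2s_0}{\gamma(X_0s_0)}$ and, for $k\ge1$, $x_{k+1}=x_k-\alpha\frac{X_k^2s_k}{\gamma(X_ks_k)}+\beta\frac{x_k-x_{k-1}}{\|X_k^{-1}(x_k-x_{k-1})\|_\infty}$ (all quantities assumed well defined). Write $\beta_k=\beta/\|X_k^{-1}(x_k-x_{k-1})\|_\infty$ ($k\ge1$), $\gamma_0=1$, $\gamma_k=\prod_{j=1}^k\beta_j$. $Q=\{(\alpha,\beta): 0<\alpha<1,\ 0\le\beta<1/\phi,\ \alpha+\beta\le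 2/3\}$ with $\phi=(1+\sqrt5)/2$. *)

theory Defs
  imports "HOL-Analysis.Analysis"
begin

definition lp_feasible :: "real^'n^'m \<Rightarrow> real^'m \<Rightarrow> real^'n \<Rightarrow> bool" where
  "lp_feasible A b x \<longleftrightarrow> A *v x = b \<and> (\<forall>i. x $ i \<ge> 0)"

definition pos_max :: "real^'n \<Rightarrow> real" where
  "pos_max u = Max {u $ i | i. u $ i > 0}"

definition diagm :: "real^'n \<Rightarrow> real^'n^'n" where
  "diagm x = (\<chi> i j. if i = j then x $ i else 0)"

definition gafs_y :: "real^'n^'m \<Rightarrow> real^'n \<Rightarrow> real^'n \<Rightarrow> real^'m" where
  "gafs_y A c x = matrix_inv (A ** diagm x ** diagm x ** transpose A)
                    *v ((A ** diagm x ** diagm x) *v c)"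

definition gafs_s :: "real^'n^'m \<Rightarrow> real^'n \<Rightarrow> real^'n \<Rightarrow> real^'n" where
  "gafs_s A c x = c - transpose A *v gafs_y A c x"

definition gafs_dir :: "real^'n^'m \<Rightarrow> real^'n \<Rightarrow> real^'n \<Rightarrow> real^'n" where
  "gafs_dir A c x = (1 / pos_max (diagm x *v gafs_s A c x)) *\<^sub>R
                      (diagm x ** diagm x *v gafs_s A c x)"

definition scaled :: "real^'n \<Rightarrow> real^'n \<Rightarrow> real^'n" where
  "scaled x v = (\<chi> i. v $ i / x $ i)"

definition gafs_betak :: "real \<Rightarrow> (nat \<Rightarrow> real^'n) \<Rightarrow> nat \<Rightarrow> real" where
  "gafs_betak \<beta> x k = \<beta> / infnorm (scaled (x k) (x k - x (k - 1)))"

definition gafs_gammak :: "real \<Rightarrow> (nat \<Rightarrow> real^'n) \<Rightarrow> nat \<Rightarrow> real" where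
  "gafs_gammak \<beta> x k = (\<Prod>j\<in>{1..k}. gafs_betak \<beta> x j)"

definition is_gafs :: "real^'n^'m \<Rightarrow> real^'n \<Rightarrow> real \<Rightarrow> real \<Rightarrow> (nat \<Rightarrow> real^'n) \<Rightarrow> bool" where
  "is_gafs A c \<alpha> \<beta> x \<longleftrightarrow>
     x 1 = x 0 - \<alpha> *\<^sub>R gafs_dir A c (x 0) \<and>
     (\<forall>k\<ge>1. x (Suc k) = x k - \<alpha> *\<^sub>R gafs_dir A c (x k)
                 + (\<beta> / infnorm (scaled (x k) (x k - x (k - 1)))) *\<^sub>R (x k - x (k - 1)))"

definition paramQ :: "(real \<times> real) set" where
  "paramQ = {(\<alpha>, \<beta>). 0 < \<alpha> \<and> \<alpha> < 1 \<and> 0 \<le> \<beta> \<and> \<beta> < 1 / ((1 + sqrt 5) / 2) \<and> \<alpha> + \<beta> \<le> 2/3}"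

end

theory Submission imports Defs begin

text \<open>The affine-scaling direction is the scaled projection of \<open>c\<close> onto the null space of
  \<open>A X\<close>, so it is a strict descent direction: \<open>c \<bullet> d(x) > 0\<close>. Writing \<open>e k\<close> for the
  decrease \<open>c \<bullet> x k - c \<bullet> x (k+1)\<close>, the momentum term gives
  \<open>e (k+1) = \<alpha> c \<bullet> d(x (k+1)) + \<beta>\<^sub>k\<^sub>+\<^sub>1 e k \<ge> \<beta>\<^sub>k\<^sub>+\<^sub>1 e k\<close>, hence \<open>e k \<ge> e 0 \<gamma>\<^sub>k\<close>.
  Summing the decreases from \<open>k\<close> on yields \<open>c \<bullet> x k - c \<bullet> x\<^sup>* \<ge> e 0 G(k)\<close>, so \<open>1 / e 0\<close>
  bounds the ratio.\<close>

lemma diagm_mult_vector: "diagm x *v u = (\<chi> i. x $ i * u $ i)"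
proof -
  have "\<And>i j. (if i = j then x $ i else 0) * u $ j = (if i = j then x $ i * u $ i else 0)"
    by auto
  then show ?thesis by (simp add: diagm_def matrix_vector_mult_def vec_eq_iff)
qed

lemma inner_diagm_diagm:
  "(w::real^'n) \<bullet> (diagm x *v (diagm x *v w)) = (\<Sum>i\<in>UNIV. (x $ i * w $ i)\<^sup>2)"
  by (simp add: diagm_mult_vector inner_vec_def power2_eq_square algebra_simps)

lemma invertible_scaled_gram:
  fixes A :: "real^'n^'m" and x :: "real^'n"
  assumes rank: "rank A = CARD('m)" and pos: "\<forall>i. x $ i > 0"
  shows "invertible (A ** diagm x ** diagm x ** transpose A)"
proof -
  let ?M = "A ** diagm x ** diagm x ** transpose A"
  have inj_AT: "inj ((*v) (transpose A))"
    using rank by (simp add: full_rank_injective[symmetric] rank_transpose del: transpose_matrix_vector)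
  have "v = 0" if "?M *v v = 0" for v
  proof -
    define w where "w = transpose A *v v"
    have "?M *v v = A *v (diagm x *v (diagm x *v w))"
      unfolding w_def by (simp add: matrix_vector_mul_assoc matrix_mul_assoc del: transpose_matrix_vector)
    then have "v \<bullet> (?M *v v) = w \<bullet> (diagm x *v (diagm x *v w))"
      unfolding w_def by (simp add: dot_lmul_matrix)
    then have "(\<Sum>i\<in>UNIV. (x $ i * w $ i)\<^sup>2) = 0"
      using that by (simp add: inner_diagm_diagm)
    then have "\<forall>i. (x $ i * w $ i)\<^sup>2 = 0"
      by (subst (asm) sum_nonneg_eq_0_iff) auto
    then have "w = 0" using pos by (simp add: vec_eq_iff) (metis less_irrefl)
    then show "v = 0" using inj_AT unfolding w_def
      by (metis inj_eq matrix_vector_mult_0_right)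
  qed
  then obtain B where "B ** ?M = mat 1"
    using matrix_left_invertible_ker by blast
  then show ?thesis using invertible_left_inverse by blast
qed

lemma matrix_inv_right: "invertible M \<Longrightarrow> M ** matrix_inv M = mat 1"
  unfolding invertible_def matrix_inv_def by (rule someI2_ex) auto

lemma gafs_step_in_null_space:
  fixes A :: "real^'n^'m" and x :: "real^'n"
  assumes "rank A = CARD('m)" and "\<forall>i. x $ i > 0"
  shows "A *v (diagm x *v (diagm x *v gafs_s A c x)) = 0"
proof -
  let ?M = "A ** diagm x ** diagm x ** transpose A"
  have "?M *v (matrix_inv ?M *v w) = w" for w
    using matrix_inv_right[OF invertible_scaled_gram[OF assms]]
    by (simp add: matrix_vector_mul_assoc)
  then have "?M *v gafs_y A c x = (A ** diagm x ** diagm x) *v c"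
    unfolding gafs_y_def .
  then show ?thesis
    unfolding gafs_s_def
    by (simp add: matrix_vector_mult_diff_distrib matrix_vector_mul_assoc matrix_mul_assoc
        del: transpose_matrix_vector)
qed

lemma inner_gafs_step:
  fixes A :: "real^'n^'m" and x :: "real^'n"
  assumes "rank A = CARD('m)" and "\<forall>i. x $ i > 0"
  shows "c \<bullet> (diagm x ** diagm x *v gafs_s A c x) = (\<Sum>i\<in>UNIV. ((diagm x *v gafs_s A c x) $ i)\<^sup>2)"
proof -
  define s where "s = gafs_s A c x"
  have c_eq: "c = s + transpose A *v gafs_y A c x"
    unfolding s_def gafs_s_def by simp
  have "(transpose A *v gafs_y A c x) \<bullet> (diagm x *v (diagm x *v s)) =
      gafs_y A c x \<bullet> (A *v (diagm x *v (diagm x *v s)))"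
    by (simp add: dot_lmul_matrix)
  also have "\<dots> = 0"
    using gafs_step_in_null_space[OF assms, of c] by (simp add: s_def)
  finally have "(transpose A *v gafs_y A c x) \<bullet> (diagm x *v (diagm x *v s)) = 0" .
  then have "c \<bullet> (diagm x ** diagm x *v s) = s \<bullet> (diagm x *v (diagm x *v s))"
    by (subst c_eq) (simp add: inner_add_left matrix_vector_mul_assoc del: transpose_matrix_vector)
  then show ?thesis
    unfolding s_def inner_diagm_diagm by (simp add: diagm_mult_vector)
qed

lemma pos_max_pos:
  assumes "\<exists>i. u $ i > 0"
  shows "pos_max u > 0"
proof -
  obtain i where i: "u $ i > 0" using assms by blast
  have "finite {u $ i | i. u $ i > 0}"
    by (simp add: setcompr_eq_image)
  then have "u $ i \<le> pos_max u"
    unfolding pos_max_def using i by (intro Max_ge) auto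
  then show ?thesis using i by simp
qed

lemma gafs_dir_descent:
  fixes A :: "real^'n^'m" and x :: "real^'n"
  assumes rank: "rank A = CARD('m)" and pos: "\<forall>i. x $ i > 0"
    and gamma: "\<exists>i. (diagm x *v gafs_s A c x) $ i > 0"
  shows "c \<bullet> gafs_dir A c x > 0"
proof -
  let ?u = "diagm x *v gafs_s A c x"
  obtain i where i: "?u $ i > 0" using gamma by blast
  have "0 < (?u $ i)\<^sup>2" using i by simp
  also have "\<dots> \<le> (\<Sum>j\<in>UNIV. (?u $ j)\<^sup>2)"
    by (rule member_le_sum) auto
  finally have "(\<Sum>j\<in>UNIV. (?u $ j)\<^sup>2) > 0" .
  moreover have "c \<bullet> gafs_dir A c x = (\<Sum>j\<in>UNIV. (?u $ j)\<^sup>2) / pos_max ?u"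
    unfolding gafs_dir_def inner_scaleR_right inner_gafs_step[OF rank pos] by simp
  ultimately show ?thesis
    using pos_max_pos[OF gamma] by simp
qed

lemma is_gafs_decrease_0:
  "is_gafs A c \<alpha> \<beta> x \<Longrightarrow> c \<bullet> x 0 - c \<bullet> x 1 = \<alpha> * (c \<bullet> gafs_dir A c (x 0))"
  unfolding is_gafs_def by (simp add: inner_diff_right)

lemma is_gafs_decrease_Suc:
  assumes "is_gafs A c \<alpha> \<beta> x"
  shows "c \<bullet> x (Suc k) - c \<bullet> x (Suc (Suc k)) =
           \<alpha> * (c \<bullet> gafs_dir A c (x (Suc k))) + gafs_betak \<beta> x (Suc k) * (c \<bullet> x k - c \<bullet> x (Suc k))"
proof -
  have "x (Suc (Suc k)) = x (Suc k) - \<alpha> *\<^sub>R gafs_dir A c (x (Suc k))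
                            + gafs_betak \<beta> x (Suc k) *\<^sub>R (x (Suc k) - x k)"
    using assms unfolding is_gafs_def gafs_betak_def
    by (metis diff_Suc_1 le_add1 plus_1_eq_Suc)
  then have "c \<bullet> x (Suc (Suc k)) = c \<bullet> x (Suc k) - \<alpha> * (c \<bullet> gafs_dir A c (x (Suc k)))
                            + gafs_betak \<beta> x (Suc k) * (c \<bullet> x (Suc k) - c \<bullet> x k)"
    by (simp add: inner_diff_right inner_add_right)
  then show ?thesis by (simp add: algebra_simps)
qed

lemma prod_lower_bound_recurrence:
  fixes e b :: "nat \<Rightarrow> real"
  assumes b_nonneg: "\<And>k. b (Suc k) \<ge> 0"
    and step: "\<And>k. e (Suc k) \<ge> b (Suc k) * e k"
  shows "e k \<ge> e 0 * (\<Prod>j\<in>{1..k}. b j)"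
proof (induction k)
  case (Suc k)
  have "e 0 * (\<Prod>j\<in>{1..Suc k}. b j) = b (Suc k) * (e 0 * (\<Prod>j\<in>{1..k}. b j))"
    by (simp add: prod.nat_ivl_Suc')
  also have "\<dots> \<le> b (Suc k) * e k"
    using Suc b_nonneg by (simp add: mult_left_mono)
  also have "\<dots> \<le> e (Suc k)" by (rule step)
  finally show ?case .
qed simp

lemma summable_dominated_by_decrease:
  fixes d g :: "nat \<Rightarrow> real"
  assumes lim: "d \<longlonglongrightarrow> L" and a: "a > 0" and g_nonneg: "\<And>k. g k \<ge> 0"
    and decrease: "\<And>k. a * g k \<le> d k - d (Suc k)"
  shows "summable g" and "suminf g \<le> (d 0 - L) / a"
proof -
  have "d (Suc n) \<le> d n" for n
    using decrease[of n] mult_nonneg_nonneg[OF less_imp_le[OF a] g_nonneg[of n]] by linarith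
  then have "decseq d" by (rule decseq_SucI)
  then have L_le: "L \<le> d n" for n by (rule decseq_ge[OF _ lim])
  have partial: "(\<Sum>j<n. g j) \<le> (d 0 - L) / a" for n
  proof -
    have "a * (\<Sum>j<n. g j) \<le> (\<Sum>j<n. d j - d (Suc j))"
      unfolding sum_distrib_left by (intro sum_mono decrease)
    also have "\<dots> = d 0 - d n" by (rule sum_lessThan_telescope')
    also have "\<dots> \<le> d 0 - L" using L_le by simp
    finally show ?thesis using a by (simp add: pos_le_divide_eq mult.commute)
  qed
  show "summable g" by (rule summableI_nonneg_bounded[OF g_nonneg partial])
  then show "suminf g \<le> (d 0 - L) / a" by (rule suminf_le_const[OF _ partial])
qed

lemma ratio_le_inverse:
  fixes G D a :: real
  assumes "a > 0" and "0 \<le> G" and "G \<le> D / a"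
  shows "G / D \<le> 1 / a"
proof (cases "D > 0")
  case True
  then show ?thesis using assms by (simp add: divide_le_eq field_simps)
next
  case False
  then have "G / D \<le> 0" using assms(2) by (simp add: divide_nonneg_nonpos)
  also have "\<dots> < 1 / a" using assms(1) by simp
  finally show ?thesis by simp
qed

theorem lemma8:
  fixes A :: "real^'n^'m" and b :: "real^'m" and c :: "real^'n"
    and \<alpha> \<beta> :: real and x :: "nat \<Rightarrow> real^'n" and xstar :: "real^'n"
  assumes rankA: "rank A = CARD('m)"
    and strictly_feasible: "\<exists>z. lp_feasible A b z \<and> (\<forall>i. z $ i > 0)"
    and nonconstant: "\<exists>z w. lp_feasible A b z \<and> lp_feasible A b w \<and> c \<bullet> z \<noteq> c \<bullet> w"
    and optimal: "\<exists>z. lp_feasible A b z \<and> (\<forall>w. lp_feasible A b w \<longrightarrow> c \<bullet> z \<le> c \<bullet> w)"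
    and Q: "(\<alpha>, \<beta>) \<in> paramQ"
    and x0: "A *v x 0 = b"
    and gafs: "is_gafs A c \<alpha> \<beta> x"
    and wd_pos: "\<forall>k i. x k $ i > 0"
    and wd_gamma: "\<forall>k. \<exists>i. (diagm (x k) *v gafs_s A c (x k)) $ i > 0"
    and wd_step: "\<forall>k\<ge>1. x k \<noteq> x (k - 1)"
    and lim: "x \<longlonglongrightarrow> xstar"
  shows "summable (gafs_gammak \<beta> x) \<and>
         (\<exists>N > 0. \<forall>k. (\<Sum>j. gafs_gammak \<beta> x (j + k)) / (c \<bullet> x k - c \<bullet> xstar) \<le> N)"
proof -
  have \<alpha>: "\<alpha> > 0" and \<beta>: "\<beta> \<ge> 0" using Q by (auto simp: paramQ_def)
  have betak_nonneg: "gafs_betak \<beta> x k \<ge> 0" for k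
    unfolding gafs_betak_def using \<beta> by (simp add: infnorm_pos_le)
  then have gammak_nonneg: "gafs_gammak \<beta> x k \<ge> 0" for k
    unfolding gafs_gammak_def by (simp add: prod_nonneg)
  define e where "e k = c \<bullet> x k - c \<bullet> x (Suc k)" for k
  have descent: "c \<bullet> gafs_dir A c (x k) > 0" for k
    using gafs_dir_descent[OF rankA] wd_pos wd_gamma by blast
  have e0_pos: "e 0 > 0"
    unfolding e_def using is_gafs_decrease_0[OF gafs] \<alpha> descent[of 0] by simp
  have "e k \<ge> e 0 * gafs_gammak \<beta> x k" for k
    unfolding gafs_gammak_def
  proof (rule prod_lower_bound_recurrence)
    show "gafs_betak \<beta> x (Suc k) \<ge> 0" for k by (rule betak_nonneg)
    show "gafs_betak \<beta> x (Suc k) * e k \<le> e (Suc k)" for k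
      unfolding e_def is_gafs_decrease_Suc[OF gafs] using \<alpha> descent[of "Suc k"] by simp
  qed
  then have tail: "summable (\<lambda>j. gafs_gammak \<beta> x (j + k)) \<and>
      (\<Sum>j. gafs_gammak \<beta> x (j + k)) \<le> (c \<bullet> x k - c \<bullet> xstar) / e 0" for k
    using summable_dominated_by_decrease[of "\<lambda>j. c \<bullet> x (j + k)" "c \<bullet> xstar" "e 0"
        "\<lambda>j. gafs_gammak \<beta> x (j + k)"]
      LIMSEQ_ignore_initial_segment[OF tendsto_inner[OF tendsto_const lim], of c k]
      e0_pos gammak_nonneg by (simp add: e_def)
  have "(\<Sum>j. gafs_gammak \<beta> x (j + k)) / (c \<bullet> x k - c \<bullet> xstar) \<le> 1 / e 0" for k
    using tail[of k] e0_pos gammak_nonneg by (intro ratio_le_inverse suminf_nonneg) simp_all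
  then show ?thesis
    using tail[of 0] e0_pos by (auto intro!: exI[of _ "1 / e 0"])
qed

end
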